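(* Let $X$ be a topological space, $\mathbb{F}$ a field, $k\ge 0$, and let $\mathcal{X}_G$ be a graph filtration of $X$ over a directed acyclic graph $G$. Then: (1) (Standard persistence) If $G$ is the path graph corresponding to a filtration $X_0 \to X_1 \to \cdots \to X_n$ and $I_{i,p}$ is the subgraph with vertices $X_i,\ldots,X_{i+p}$ (and the edges between consecutive ones), then $H_k^{I_{i,p}}(\mathcal{X}_G) \cong H_k^p(X_i)$, where $H_k^p(X_i)$ is the image of the map $H_k(X_i)\to H_k(X_{i+p})$ induced by inclusion. Furthermore, $\mathcal{PH}_k(\mathcal{X}_G)$ coincides with the (standard) persistence module of the filtration. (2) (Zigzag persistence) If $G$ is the graph of a zigzag diagram $\mathbb{X} = X_0 \leftrightarrow X_1 \leftrightarrow \cdots \leftrightarrow X_n$, where each arrow may point in either direction, then the zigzag module $H_k(\mathbb{X})$ (the diagram $H_k(X_0)\leftrightarrow \cdots \leftrightarrow H_k(X_n)$ of induced maps) is isomorphic to $\mathcal{PH}_k(\mathcal{X}_G)$. (3) (Multidimensional persistence) If $\mathcal{X} = \{X_v\}_{v\in\{0,\ldots,m\}^d}$ is a multifiltration with underlying graph $G$, and for $u\le v$ we let $G_{u,v}$ be the subgraph of $G$ on the vertices $\{w \in G : u \le w \le v\}$, then the rank invariant satisfies $\rho_{X,k}(u,v) = \dim H_k^{G_{u,v}}(\mathcal{X}_G)$.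
   Context: All homology is taken with coefficients in the field $\mathbb{F}$, so homology groups are vector spaces; they are assumed finitely generated. For a directed acyclic graph $G=(V,E)$, a graph filtration $\mathcal{X}_G$ of a space $X$ is a pair $(\{X_v\}_{v\in V},\{f_e\}_{e\in E})$ with $X_v\subset X$ and, for each edge $e=(v_1,v_2)$, $f_e:X_{v_1}\to X_{v_2}$ a continuous embedding (inclusion). For a connected subgraph $G'\subset G$, the $G'$-persistent homology group $H_k^{G'}(\mathcal{X}_G)$ is a vector space $\mathcal{P}$ of largest dimension equipped with injective linear maps $i_v:\mathcal{P}\to H_k(X_v)$ for all vertices $v$ of $G'$ such that $(f_e)_*\circ i_u = i_v$ for every edge $e=(u,v)$ of $G'$ (well defined up to isomorphism). A commutative $G$-module is a family of vector spaces $W_v$ ($v\in V$) and linear maps $W_u\to W_w$ for edges $(u,w)$ forming a commutative diagram; the persistence module $\mathcal{PH}_k(\mathcal{X}_G)$ is the commutative $G$-module $(\{H_k(X_v)\},\{(f_e)_*\})$. A multifiltration indexed by $\{0,\ldots,m\}^d$ is a family of spaces $X_v$ with inclusions $X_u\subset X_v$ whenever $u\le v$ in the componentwise partial order; its underlying graph has an edge from $u$ to each $u+e_i$ (for standard basis vectors $e_i$) in the grid. The rank invariant $\rho_{X,k}(u,v)$, for $u\le v$, is the dimension of the image of the map $H_k(X_u)\to H_k(X_v)$ induced by inclusion. *)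

theory Defs
  imports "HOL-Homology.Homology"
begin

text \<open>HOL-Homology only provides integer coefficients, so singular chains with
coefficients in a field 'k are introduced here, reusing the library notions of
singular simplex and singular face.\<close>

type_synonym ('a, 'k) fchain = "((nat \<Rightarrow> real) \<Rightarrow> 'a) \<Rightarrow>\<^sub>0 'k"

definition fscale :: "'k::field \<Rightarrow> ('a, 'k) fchain \<Rightarrow> ('a, 'k) fchain" where
  "fscale a c = Poly_Mapping.map (\<lambda>x. a * x) c"

definition fchain_on :: "nat \<Rightarrow> 'a topology \<Rightarrow> ('a, 'k::field) fchain \<Rightarrow> bool" where
  "fchain_on p T c \<longleftrightarrow> (\<forall>f \<in> Poly_Mapping.keys c. singular_simplex p T f)"

definition fboundary :: "nat \<Rightarrow> ('a, 'k::field) fchain \<Rightarrow> ('a, 'k) fchain" where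
  "fboundary p c =
     (if p = 0 then 0 else
      (\<Sum>f \<in> Poly_Mapping.keys c. \<Sum>j\<le>p.
          Poly_Mapping.single (singular_face p j f) ((-1) ^ j * Poly_Mapping.lookup c f)))"

definition fcycles :: "nat \<Rightarrow> 'a topology \<Rightarrow> ('a, 'k::field) fchain set" where
  "fcycles p T = {c. fchain_on p T c \<and> fboundary p c = 0}"

definition fboundaries :: "nat \<Rightarrow> 'a topology \<Rightarrow> ('a, 'k::field) fchain set" where
  "fboundaries p T = {fboundary (Suc p) d | d. fchain_on (Suc p) T d}"

definition hclass :: "nat \<Rightarrow> 'a topology \<Rightarrow> ('a, 'k::field) fchain \<Rightarrow> ('a, 'k) fchain set" where
  "hclass p T z = {z + b | b. b \<in> fboundaries p T}"

definition hgroup :: "nat \<Rightarrow> 'a topology \<Rightarrow> 'a set \<Rightarrow> ('a, 'k::field) fchain set set" where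
  "hgroup p X S = {hclass p (subtopology X S) z | z. z \<in> fcycles p (subtopology X S)}"

definition hinduced :: "nat \<Rightarrow> 'a topology \<Rightarrow> 'a set \<Rightarrow> 'a set
     \<Rightarrow> ('a, 'k::field) fchain set \<Rightarrow> ('a, 'k) fchain set" where
  "hinduced p X S S' C = hclass p (subtopology X S') (SOME z. z \<in> C)"

definition fg_homology :: "nat \<Rightarrow> 'a topology \<Rightarrow> 'a set \<Rightarrow> 'k::field itself \<Rightarrow> bool" where
  "fg_homology p X S _ \<longleftrightarrow>
     (\<exists>F :: ('a,'k) fchain set. finite F \<and> F \<subseteq> fcycles p (subtopology X S) \<and>
        fcycles p (subtopology X S) \<subseteq> module.span fscale (F \<union> fboundaries p (subtopology X S)))"

text \<open>Dimension of the image of H_p(S) \<rightarrow> H_p(S') (S \<subseteq> S'), i.e. of the subspace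
(Z_p(S) + B_p(S'))/B_p(S') of H_p(S'): the least number of cycles of S spanning
Z_p(S) modulo B_p(S').\<close>
definition hrank :: "nat \<Rightarrow> 'a topology \<Rightarrow> 'a set \<Rightarrow> 'a set \<Rightarrow> 'k::field itself \<Rightarrow> nat" where
  "hrank p X S S' _ =
     (LEAST n. \<exists>F :: ('a,'k) fchain set. finite F \<and> card F = n \<and> F \<subseteq> fcycles p (subtopology X S) \<and>
        fcycles p (subtopology X S) \<subseteq> module.span fscale (F \<union> fboundaries p (subtopology X S')))"

definition graph_filtration :: "'a topology \<Rightarrow> 'v set \<Rightarrow> ('v \<times> 'v) set \<Rightarrow> ('v \<Rightarrow> 'a set) \<Rightarrow> bool" where
  "graph_filtration X V E Xs \<longleftrightarrow>
     (\<forall>v\<in>V. Xs v \<subseteq> topspace X) \<and> (\<forall>(u,w)\<in>E. u \<in> V \<and> w \<in> V \<and> Xs u \<subseteq> Xs w)"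

text \<open>A linear map i from the vector space P (a subspace of the chain space, scalar
multiplication fscale) into H_p(S), given by choosing a representing cycle i x
of the class of each x: linearity and injectivity hold modulo boundaries.\<close>
definition hlinear_inj :: "nat \<Rightarrow> 'a topology \<Rightarrow> 'a set \<Rightarrow> ('a, 'k::field) fchain set
     \<Rightarrow> (('a, 'k) fchain \<Rightarrow> ('a, 'k) fchain) \<Rightarrow> bool" where
  "hlinear_inj p X S P i \<longleftrightarrow>
     (let B = fboundaries p (subtopology X S) in
       (\<forall>x\<in>P. i x \<in> fcycles p (subtopology X S)) \<and>
       (\<forall>x\<in>P. \<forall>y\<in>P. i (x + y) - (i x + i y) \<in> B) \<and>
       (\<forall>a. \<forall>x\<in>P. i (fscale a x) - fscale a (i x) \<in> B) \<and>
       (\<forall>x\<in>P. \<forall>y\<in>P. i x - i y \<in> B \<longrightarrow> x = y))"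

text \<open>(P, (i_v)) is a compatible family over the subgraph (V', E'): injective linear
maps i_v : P \<rightarrow> H_p(X_v) with (f_e)_* \<circ> i_u = i_v for e = (u,v) \<in> E'.\<close>
definition compatible_family :: "nat \<Rightarrow> 'a topology \<Rightarrow> ('v \<Rightarrow> 'a set) \<Rightarrow> 'v set \<Rightarrow> ('v \<times> 'v) set
     \<Rightarrow> ('a, 'k::field) fchain set \<Rightarrow> ('v \<Rightarrow> ('a, 'k) fchain \<Rightarrow> ('a, 'k) fchain) \<Rightarrow> bool" where
  "compatible_family p X Xs V' E' P i \<longleftrightarrow>
     module.subspace fscale P \<and>
     (\<forall>v\<in>V'. hlinear_inj p X (Xs v) P (i v)) \<and>
     (\<forall>(u,v)\<in>E'. \<forall>x\<in>P. i u x - i v x \<in> fboundaries p (subtopology X (Xs v)))"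

definition persistent_group :: "nat \<Rightarrow> 'a topology \<Rightarrow> ('v \<Rightarrow> 'a set) \<Rightarrow> 'v set \<Rightarrow> ('v \<times> 'v) set
     \<Rightarrow> ('a, 'k::field) fchain set \<Rightarrow> ('v \<Rightarrow> ('a, 'k) fchain \<Rightarrow> ('a, 'k) fchain) \<Rightarrow> bool" where
  "persistent_group p X Xs V' E' P i \<longleftrightarrow>
     compatible_family p X Xs V' E' P i \<and>
     (\<forall>(P' :: ('a, 'k) fchain set) (i' :: 'v \<Rightarrow> ('a, 'k) fchain \<Rightarrow> ('a, 'k) fchain).
         compatible_family p X Xs V' E' P' i' \<longrightarrow>
         vector_space.dim fscale P' \<le> vector_space.dim fscale P)"

definition PH_module :: "nat \<Rightarrow> 'a topology \<Rightarrow> ('v \<Rightarrow> 'a set) \<Rightarrow> 'v set \<Rightarrow> ('v \<times> 'v) set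
     \<Rightarrow> ('v \<Rightarrow> ('a, 'k::field) fchain set set) \<times>
        ('v \<times> 'v \<Rightarrow> ('a, 'k) fchain set \<Rightarrow> ('a, 'k) fchain set)" where
  "PH_module p X Xs V E =
     (\<lambda>v. if v \<in> V then hgroup p X (Xs v) else {},
      \<lambda>(u,w). if (u,w) \<in> E then hinduced p X (Xs u) (Xs w) else (\<lambda>C. C))"

definition path_edges :: "nat \<Rightarrow> (nat \<times> nat) set" where
  "path_edges n = {(j, Suc j) | j. j < n}"

definition std_persistence_module :: "nat \<Rightarrow> 'a topology \<Rightarrow> (nat \<Rightarrow> 'a set) \<Rightarrow> nat
     \<Rightarrow> (nat \<Rightarrow> ('a, 'k::field) fchain set set) \<times>
        (nat \<times> nat \<Rightarrow> ('a, 'k) fchain set \<Rightarrow> ('a, 'k) fchain set)" where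
  "std_persistence_module p X Xs n =
     (\<lambda>j. if j \<le> n then hgroup p X (Xs j) else {},
      \<lambda>(a,b). if b = Suc a \<and> a < n then hinduced p X (Xs a) (Xs b) else (\<lambda>C. C))"

text \<open>Zigzag X_0 \<leftrightarrow> ... \<leftrightarrow> X_n: dir j means the arrow X_j \<rightarrow> X_(j+1), otherwise X_(j+1) \<rightarrow> X_j.\<close>
definition zigzag_edges :: "nat \<Rightarrow> (nat \<Rightarrow> bool) \<Rightarrow> (nat \<times> nat) set" where
  "zigzag_edges n dir = {(j, Suc j) | j. j < n \<and> dir j} \<union> {(Suc j, j) | j. j < n \<and> \<not> dir j}"

definition zigzag_module :: "nat \<Rightarrow> 'a topology \<Rightarrow> (nat \<Rightarrow> 'a set) \<Rightarrow> nat \<Rightarrow> (nat \<Rightarrow> bool)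
     \<Rightarrow> (nat \<Rightarrow> ('a, 'k::field) fchain set set) \<times>
        (nat \<times> nat \<Rightarrow> ('a, 'k) fchain set \<Rightarrow> ('a, 'k) fchain set)" where
  "zigzag_module p X Xs n dir =
     (\<lambda>j. if j \<le> n then hgroup p X (Xs j) else {},
      \<lambda>(a,b). if b = Suc a \<and> a < n \<and> dir a then hinduced p X (Xs a) (Xs b)
              else if a = Suc b \<and> b < n \<and> \<not> dir b then hinduced p X (Xs a) (Xs b)
              else (\<lambda>C. C))"

text \<open>Grid points are functions nat \<Rightarrow> nat vanishing from index d on; the order is
the componentwise order (le_fun).\<close>
definition grid :: "nat \<Rightarrow> nat \<Rightarrow> (nat \<Rightarrow> nat) set" where
  "grid d m = {v. (\<forall>i<d. v i \<le> m) \<and> (\<forall>i\<ge>d. v i = 0)}"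

definition grid_edges :: "nat \<Rightarrow> nat \<Rightarrow> ((nat \<Rightarrow> nat) \<times> (nat \<Rightarrow> nat)) set" where
  "grid_edges d m = {(u, u(i := Suc (u i))) | u i. u \<in> grid d m \<and> i < d \<and> u i < m}"

definition multifiltration :: "'a topology \<Rightarrow> nat \<Rightarrow> nat \<Rightarrow> ((nat \<Rightarrow> nat) \<Rightarrow> 'a set) \<Rightarrow> bool" where
  "multifiltration X d m Xs \<longleftrightarrow>
     (\<forall>v\<in>grid d m. Xs v \<subseteq> topspace X) \<and>
     (\<forall>u\<in>grid d m. \<forall>v\<in>grid d m. u \<le> v \<longrightarrow> Xs u \<subseteq> Xs v)"

definition box_vertices :: "nat \<Rightarrow> nat \<Rightarrow> (nat \<Rightarrow> nat) \<Rightarrow> (nat \<Rightarrow> nat) \<Rightarrow> (nat \<Rightarrow> nat) set" where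
  "box_vertices d m u v = {w \<in> grid d m. u \<le> w \<and> w \<le> v}"

definition box_edges :: "nat \<Rightarrow> nat \<Rightarrow> (nat \<Rightarrow> nat) \<Rightarrow> (nat \<Rightarrow> nat) \<Rightarrow> ((nat \<Rightarrow> nat) \<times> (nat \<Rightarrow> nat)) set" where
  "box_edges d m u v = {e \<in> grid_edges d m. fst e \<in> box_vertices d m u v \<and> snd e \<in> box_vertices d m u v}"

end

theory Submission
  imports Defs
begin

text \<open>Let the subgraph have a source s and a sink t reachable from s, all of its
spaces lying between X_s and X_t (an interval of a path, a box of a grid).  A
minimal set of cycles of X_s generating the image of H(X_s) in H(X_t) is
independent there, so its span with identity maps is a compatible family of that
dimension.  Conversely, for any compatible family, i_s and i_t agree in H(X_t)
along a path from s to t and i_t is injective, so i_s maps a basis to classes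
independent in H(X_t); the dimension is therefore at most the rank of
H(X_s) \<rightarrow> H(X_t).\<close>

text \<open>Only meaningful for finite I, the sum over an infinite set being 0.\<close>
definition independent_modulo ::
    "('a::field \<Rightarrow> 'b::ab_group_add \<Rightarrow> 'b) \<Rightarrow> 'b set \<Rightarrow> 'c set \<Rightarrow> ('c \<Rightarrow> 'b) \<Rightarrow> bool" where
  "independent_modulo sc B I h \<longleftrightarrow> (\<forall>c. (\<Sum>x\<in>I. sc (c x) (h x)) \<in> B \<longrightarrow> (\<forall>x\<in>I. c x = 0))"

context vector_space
begin

lemma independent_modulo_imp_independent:
  assumes "subspace B" "finite S" "independent_modulo scale B S (\<lambda>x. x)"
  shows "independent S"
proof
  assume "dependent S"
  then obtain u where u: "\<exists>v\<in>S. u v \<noteq> 0" "(\<Sum>v\<in>S. u v *s v) = 0"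
    using dependent_finite[OF assms(2)] by blast
  have "(\<Sum>v\<in>S. u v *s v) \<in> B" using u(2) subspace_0[OF assms(1)] by simp
  with assms(3) u(1) show False unfolding independent_modulo_def by blast
qed

text \<open>A spanning set modulo B of least cardinality is independent modulo B: a
nontrivial relation would let one of its elements be dropped.\<close>
lemma minimal_spanning_independent_modulo:
  assumes B: "subspace B" and fin: "finite S" and Z: "Z \<subseteq> span (S \<union> B)"
    and min: "\<And>S'. S' \<subseteq> S \<Longrightarrow> Z \<subseteq> span (S' \<union> B) \<Longrightarrow> card S \<le> card S'"
  shows "independent_modulo scale B S (\<lambda>x. x)"
  unfolding independent_modulo_def
proof (intro allI impI ballI, rule ccontr)
  fix u g assume su: "(\<Sum>f\<in>S. u f *s f) \<in> B" and g: "g \<in> S" "u g \<noteq> 0"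
  define S' where "S' = S - {g}"
  have split: "(\<Sum>f\<in>S. u f *s f) = u g *s g + (\<Sum>f\<in>S'. u f *s f)"
    unfolding S'_def using fin g(1) by (simp add: sum.remove)
  have "(\<Sum>f\<in>S. u f *s f) \<in> span (S' \<union> B)"
    using su span_superset by blast
  moreover have "(\<Sum>f\<in>S'. u f *s f) \<in> span (S' \<union> B)"
    by (intro span_sum span_scale) (auto intro: span_base)
  ultimately have "(\<Sum>f\<in>S. u f *s f) - (\<Sum>f\<in>S'. u f *s f) \<in> span (S' \<union> B)"
    by (rule span_diff)
  then have "u g *s g \<in> span (S' \<union> B)"
    by (simp add: split)
  then have "inverse (u g) *s u g *s g \<in> span (S' \<union> B)"
    by (rule span_scale)
  then have "g \<in> span (S' \<union> B)" using g(2) by simp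
  then have "S \<union> B \<subseteq> span (S' \<union> B)"
    by (auto simp: S'_def intro: span_base)
  then have "span (S \<union> B) \<subseteq> span (S' \<union> B)"
    by (simp add: span_minimal)
  with Z have "card S \<le> card S'" by (intro min) (auto simp: S'_def)
  moreover have "card S' < card S" unfolding S'_def by (rule card_Diff1_less[OF fin g(1)])
  ultimately show False by simp
qed

text \<open>Projecting each member to span S
along B gives a genuinely independent family in span S.\<close>
lemma card_le_if_independent_modulo:
  assumes B: "subspace B" and fin: "finite S" and finI: "finite I"
    and h: "\<And>x. x \<in> I \<Longrightarrow> h x \<in> span (S \<union> B)"
    and ind: "independent_modulo scale B I h"
  shows "card I \<le> card S"
proof -
  have "\<forall>x\<in>I. \<exists>g. g \<in> span S \<and> h x - g \<in> B"
  proof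
    fix x assume "x \<in> I"
    from h[OF this] obtain a b where "h x = a + b" "a \<in> span S" "b \<in> span B"
      unfolding span_Un by blast
    moreover have "span B = B" using B by (simp add: span_eq_iff)
    ultimately show "\<exists>g. g \<in> span S \<and> h x - g \<in> B" by (intro exI[of _ a]) simp
  qed
  then obtain g where g: "\<forall>x\<in>I. g x \<in> span S \<and> h x - g x \<in> B"
    by (rule bchoice[THEN exE])
  have gind: "\<forall>x\<in>I. c x = 0" if c: "(\<Sum>x\<in>I. c x *s g x) = 0" for c
  proof -
    have "(\<Sum>x\<in>I. c x *s h x) = (\<Sum>x\<in>I. c x *s (h x - g x)) + (\<Sum>x\<in>I. c x *s g x)"
      by (simp add: scale_right_diff_distrib sum_subtractf)
    also have "\<dots> = (\<Sum>x\<in>I. c x *s (h x - g x))" using c by simp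
    also have "\<dots> \<in> B" using g by (intro subspace_sum[OF B] subspace_scale[OF B]) auto
    finally show ?thesis using ind unfolding independent_modulo_def by blast
  qed
  have inj: "inj_on g I"
  proof (rule inj_onI, rule ccontr)
    fix x y assume xy: "x \<in> I" "y \<in> I" "g x = g y" "x \<noteq> y"
    define c where "c z = (if z = x then 1 else if z = y then -1 else (0::'a))" for z
    have "(\<Sum>z\<in>I. c z *s g z) = (\<Sum>z\<in>{x,y}. c z *s g z)"
      by (rule sum.mono_neutral_right) (use finI xy in \<open>auto simp: c_def\<close>)
    also have "\<dots> = 0" using xy by (simp add: c_def)
    finally have "\<forall>z\<in>I. c z = 0" by (rule gind)
    then have "c x = 0" using xy(1) by blast
    then show False by (simp add: c_def)
  qed
  have "independent (g ` I)"
  proof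
    assume "dependent (g ` I)"
    then obtain u where u: "\<exists>v\<in>g ` I. u v \<noteq> 0" "(\<Sum>v\<in>g ` I. u v *s v) = 0"
      using dependent_finite[OF finite_imageI[OF finI]] by blast
    then have "(\<Sum>x\<in>I. u (g x) *s g x) = 0" by (simp add: sum.reindex[OF inj])
    then have "\<forall>x\<in>I. u (g x) = 0" by (rule gind)
    with u(1) show False by auto
  qed
  moreover have "g ` I \<subseteq> span S" using g by auto
  ultimately have "card (g ` I) \<le> card S" using independent_span_bound[OF fin] by blast
  then show ?thesis using card_image[OF inj] by simp
qed

end

lemma lookup_fscale [simp]: "Poly_Mapping.lookup (fscale a c) x = a * Poly_Mapping.lookup c x"
  unfolding fscale_def by (simp add: Poly_Mapping.map.rep_eq when_def)

interpretation fs: vector_space "fscale :: 'k::field \<Rightarrow> ('a, 'k) fchain \<Rightarrow> _"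
  by unfold_locales (auto simp: poly_mapping_eq_iff fun_eq_iff lookup_add algebra_simps)

lemma keys_fscale: "Poly_Mapping.keys (fscale a c) \<subseteq> Poly_Mapping.keys c"
  by (auto simp: in_keys_iff)

lemma fchain_on_subtopology_mono:
  "S \<subseteq> S' \<Longrightarrow> fchain_on p (subtopology X S) c \<Longrightarrow> fchain_on p (subtopology X S') c"
  unfolding fchain_on_def singular_simplex_subtopology by blast

lemma fchain_on_add: "fchain_on p T c \<Longrightarrow> fchain_on p T d \<Longrightarrow> fchain_on p T (c + d)"
  unfolding fchain_on_def using keys_add[of c d] by blast

lemma fchain_on_fscale: "fchain_on p T c \<Longrightarrow> fchain_on p T (fscale a c)"
  unfolding fchain_on_def using keys_fscale[of a c] by blast

lemma fboundary_eq_sum_over: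
  assumes "finite K" "Poly_Mapping.keys c \<subseteq> K"
  shows "fboundary p c = (if p = 0 then 0 else
      (\<Sum>f \<in> K. \<Sum>j\<le>p. Poly_Mapping.single (singular_face p j f) ((-1) ^ j * Poly_Mapping.lookup c f)))"
proof -
  have "(\<Sum>f \<in> K. \<Sum>j\<le>p. Poly_Mapping.single (singular_face p j f) ((-1) ^ j * Poly_Mapping.lookup c f))
     = (\<Sum>f \<in> Poly_Mapping.keys c. \<Sum>j\<le>p. Poly_Mapping.single (singular_face p j f) ((-1) ^ j * Poly_Mapping.lookup c f))"
    by (rule sum.mono_neutral_right[OF assms]) (auto simp: in_keys_iff)
  then show ?thesis by (simp add: fboundary_def)
qed

lemma fboundary_add: "fboundary p (c + d) = fboundary p c + fboundary p d"
proof -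
  let ?K = "Poly_Mapping.keys c \<union> Poly_Mapping.keys d"
  have "Poly_Mapping.keys (c + d) \<subseteq> ?K" by (rule keys_add)
  then show ?thesis
    by (simp add: fboundary_eq_sum_over[of ?K] lookup_add distrib_left single_add sum.distrib)
qed

lemma fscale_single [simp]: "fscale a (Poly_Mapping.single x b) = Poly_Mapping.single x (a * b)"
  by (simp add: poly_mapping_eq_iff fun_eq_iff lookup_single when_def)

lemma fboundary_fscale: "fboundary p (fscale a c) = fscale a (fboundary p c)"
  using keys_fscale[of a c]
  by (simp add: fboundary_eq_sum_over[of "Poly_Mapping.keys c"] fs.scale_sum_right mult.left_commute)

lemma fboundary_0 [simp]: "fboundary p 0 = 0"
  by (simp add: fboundary_def)

lemma fchain_on_0 [simp]: "fchain_on p T 0"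
  by (simp add: fchain_on_def)

lemma subspace_fcycles: "fs.subspace (fcycles p T)"
  unfolding fs.subspace_def fcycles_def
  by (auto simp: fchain_on_add fchain_on_fscale fboundary_add fboundary_fscale)

lemma subspace_fboundaries: "fs.subspace (fboundaries p T)"
  unfolding fs.subspace_def fboundaries_def
proof (intro conjI)
  show "0 \<in> {fboundary (Suc p) d | d. fchain_on (Suc p) T d}"
    by (rule CollectI, rule exI[of _ 0]) simp
qed (clarsimp; metis fboundary_add fboundary_fscale fchain_on_add fchain_on_fscale)+

lemma zero_in_fboundaries [simp]: "0 \<in> fboundaries p T"
  by (rule fs.subspace_0[OF subspace_fboundaries])

lemma fcycles_subtopology_mono:
  "S \<subseteq> S' \<Longrightarrow> fcycles p (subtopology X S) \<subseteq> fcycles p (subtopology X S')"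
  unfolding fcycles_def using fchain_on_subtopology_mono by blast

lemma fboundaries_subtopology_mono:
  "S \<subseteq> S' \<Longrightarrow> fboundaries p (subtopology X S) \<subseteq> fboundaries p (subtopology X S')"
  unfolding fboundaries_def using fchain_on_subtopology_mono by blast

lemma hlinear_injD:
  assumes "hlinear_inj p X S P i"
  shows "x \<in> P \<Longrightarrow> i x \<in> fcycles p (subtopology X S)"
    and "x \<in> P \<Longrightarrow> y \<in> P \<Longrightarrow> i (x + y) - (i x + i y) \<in> fboundaries p (subtopology X S)"
    and "x \<in> P \<Longrightarrow> i (fscale a x) - fscale a (i x) \<in> fboundaries p (subtopology X S)"
    and "x \<in> P \<Longrightarrow> y \<in> P \<Longrightarrow> i x - i y \<in> fboundaries p (subtopology X S) \<Longrightarrow> x = y"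
  using assms unfolding hlinear_inj_def Let_def by simp_all

lemma hlinear_inj_zero:
  assumes "hlinear_inj p X S P i" "fs.subspace P"
  shows "i 0 \<in> fboundaries p (subtopology X S)"
proof -
  have "0 \<in> P" using assms(2) by (rule fs.subspace_0)
  then have "i (0 + 0) - (i 0 + i 0) \<in> fboundaries p (subtopology X S)"
    by (intro hlinear_injD(2)[OF assms(1)])
  then have "- (i 0) \<in> fboundaries p (subtopology X S)" by simp
  then show ?thesis using fs.subspace_neg[OF subspace_fboundaries] by fastforce
qed

lemma hlinear_inj_sum:
  assumes hl: "hlinear_inj p X S P i" and P: "fs.subspace P" and fin: "finite A"
    and xP: "\<And>a. a \<in> A \<Longrightarrow> x a \<in> P"
  shows "i (\<Sum>a\<in>A. fscale (c a) (x a)) - (\<Sum>a\<in>A. fscale (c a) (i (x a)))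
           \<in> fboundaries p (subtopology X S)"
  using fin xP
proof (induction A rule: finite_induct)
  case empty
  then show ?case using hlinear_inj_zero[OF hl P] by simp
next
  case (insert a A)
  let ?B = "fboundaries p (subtopology X S)"
  let ?y = "fscale (c a) (x a)" and ?r = "\<Sum>a\<in>A. fscale (c a) (x a)"
    and ?ir = "\<Sum>a\<in>A. fscale (c a) (i (x a))"
  have yP: "?y \<in> P" using insert P by (simp add: fs.subspace_scale)
  have rP: "?r \<in> P" using insert P by (simp add: fs.subspace_sum fs.subspace_scale)
  have "i (?y + ?r) - (fscale (c a) (i (x a)) + ?ir)
      = (i (?y + ?r) - (i ?y + i ?r)) + (i ?y - fscale (c a) (i (x a))) + (i ?r - ?ir)"
    by (simp add: algebra_simps)
  also have "\<dots> \<in> ?B"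
    using hlinear_injD(2)[OF hl yP rP] hlinear_injD(3)[OF hl, of "x a"] insert
    by (intro fs.subspace_add[OF subspace_fboundaries]) auto
  finally show ?case using insert by simp
qed

lemma compatible_familyD:
  assumes "compatible_family p X Xs V' E' P i"
  shows "fs.subspace P"
    and "v \<in> V' \<Longrightarrow> hlinear_inj p X (Xs v) P (i v)"
    and "(u, v) \<in> E' \<Longrightarrow> x \<in> P \<Longrightarrow> i u x - i v x \<in> fboundaries p (subtopology X (Xs v))"
  using assms unfolding compatible_family_def by auto

lemma compatible_family_rtrancl_diff:
  assumes cf: "compatible_family p X Xs V' E' P i" and EV: "E' \<subseteq> V' \<times> V'"
    and below: "\<And>w. w \<in> V' \<Longrightarrow> Xs w \<subseteq> Xs t"
    and path: "(s, w) \<in> E'\<^sup>*" and x: "x \<in> P"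
  shows "i s x - i w x \<in> fboundaries p (subtopology X (Xs t))"
  using path
proof (induction rule: rtrancl_induct)
  case base
  then show ?case by simp
next
  case (step y z)
  have "i y x - i z x \<in> fboundaries p (subtopology X (Xs z))"
    by (rule compatible_familyD(3)[OF cf step(2) x])
  also have "\<dots> \<subseteq> fboundaries p (subtopology X (Xs t))"
    using step(2) EV below by (intro fboundaries_subtopology_mono) blast
  finally have "i y x - i z x \<in> fboundaries p (subtopology X (Xs t))" .
  then have "(i s x - i y x) + (i y x - i z x) \<in> fboundaries p (subtopology X (Xs t))"
    by (rule fs.subspace_add[OF subspace_fboundaries step(3)])
  then show ?case by simp
qed

lemma hrank_minimal_generators:
  fixes F :: "'k::field itself"
  assumes fg: "fg_homology k X S F" and SS': "S \<subseteq> S'"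
  obtains G :: "('a, 'k) fchain set"
  where "finite G" "card G = hrank k X S S' F" "G \<subseteq> fcycles k (subtopology X S)"
    "fcycles k (subtopology X S) \<subseteq> fs.span (G \<union> fboundaries k (subtopology X S'))"
    "independent_modulo fscale (fboundaries k (subtopology X S')) G (\<lambda>x. x)"
proof -
  define Z :: "('a, 'k) fchain set" where "Z = fcycles k (subtopology X S)"
  define B :: "('a, 'k) fchain set" where "B = fboundaries k (subtopology X S')"
  define Q where "Q n \<longleftrightarrow> (\<exists>G. finite G \<and> card G = n \<and> G \<subseteq> Z \<and> Z \<subseteq> fs.span (G \<union> B))" for n
  have hrank: "hrank k X S S' F = (LEAST n. Q n)"
    unfolding hrank_def Q_def Z_def B_def ..
  obtain G0 :: "('a, 'k) fchain set" where G0: "finite G0" "G0 \<subseteq> Z"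
    "Z \<subseteq> fs.span (G0 \<union> fboundaries k (subtopology X S))"
    using fg unfolding fg_homology_def Z_def by blast
  have "fs.span (G0 \<union> fboundaries k (subtopology X S)) \<subseteq> fs.span (G0 \<union> B)"
    unfolding B_def by (intro fs.span_mono Un_mono order_refl fboundaries_subtopology_mono SS')
  with G0 have "Q (card G0)" unfolding Q_def by blast
  then have "Q (LEAST n. Q n)" by (rule LeastI)
  then obtain G where G: "finite G" "card G = (LEAST n. Q n)" "G \<subseteq> Z" "Z \<subseteq> fs.span (G \<union> B)"
    unfolding Q_def by blast
  have "independent_modulo fscale B G (\<lambda>x. x)"
  proof (rule fs.minimal_spanning_independent_modulo)
    show "card G \<le> card G'" if "G' \<subseteq> G" "Z \<subseteq> fs.span (G' \<union> B)" for G'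
    proof -
      have "Q (card G')" unfolding Q_def using that G(1,3) finite_subset by blast
      then show ?thesis unfolding G(2) by (rule Least_le)
    qed
  qed (use G in \<open>auto simp: B_def subspace_fboundaries\<close>)
  with G hrank show thesis using that unfolding Z_def B_def by simp
qed

lemma compatible_family_span_generators:
  assumes G: "finite G" "G \<subseteq> fcycles k (subtopology X (Xs s))"
    and ind: "independent_modulo fscale (fboundaries k (subtopology X (Xs t))) G (\<lambda>x. x)"
    and between: "\<And>w. w \<in> V' \<Longrightarrow> Xs s \<subseteq> Xs w \<and> Xs w \<subseteq> Xs t"
  shows "compatible_family k X Xs V' E' (fs.span G) (\<lambda>_ x. x)"
  unfolding compatible_family_def
proof (intro conjI ballI)
  fix v assume v: "v \<in> V'"
  have cycles: "fs.span G \<subseteq> fcycles k (subtopology X (Xs v))"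
    using fcycles_subtopology_mono[of "Xs s" "Xs v"] between[OF v] G(2)
    by (intro fs.span_minimal subspace_fcycles) auto
  have inj: "x = y" if x: "x \<in> fs.span G" and y: "y \<in> fs.span G"
      and xy: "x - y \<in> fboundaries k (subtopology X (Xs v))" for x y
  proof -
    obtain u where u: "x - y = (\<Sum>f\<in>G. fscale (u f) f)"
      using fs.span_diff[OF x y] unfolding fs.span_finite[OF G(1)] by blast
    have "x - y \<in> fboundaries k (subtopology X (Xs t))"
      using xy fboundaries_subtopology_mono between[OF v] by blast
    then have "\<forall>f\<in>G. u f = 0" using ind unfolding u independent_modulo_def by blast
    then show "x = y" using u by simp
  qed
  show "hlinear_inj k X (Xs v) (fs.span G) (\<lambda>x. x)"
    unfolding hlinear_inj_def Let_def using cycles inj by auto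
qed auto

lemma compatible_family_independent_modulo:
  assumes cf: "compatible_family k X Xs V' E' P i" and "s \<in> V'" "t \<in> V'"
    and EV: "E' \<subseteq> V' \<times> V'" and path: "(s, t) \<in> E'\<^sup>*"
    and below: "\<And>w. w \<in> V' \<Longrightarrow> Xs w \<subseteq> Xs t"
    and A: "A \<subseteq> P" "finite A" "fs.independent A"
  shows "independent_modulo fscale (fboundaries k (subtopology X (Xs t))) A (i s)"
  unfolding independent_modulo_def
proof (intro allI impI)
  let ?B = "fboundaries k (subtopology X (Xs t))"
  fix c assume csum: "(\<Sum>x\<in>A. fscale (c x) (i s x)) \<in> ?B"
  have BS: "fs.subspace ?B" by (rule subspace_fboundaries)
  have P: "fs.subspace P" by (rule compatible_familyD(1)[OF cf])
  have hls: "hlinear_inj k X (Xs s) P (i s)" and hlt: "hlinear_inj k X (Xs t) P (i t)"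
    using compatible_familyD(2)[OF cf] \<open>s \<in> V'\<close> \<open>t \<in> V'\<close> by blast+
  define y where "y = (\<Sum>x\<in>A. fscale (c x) x)"
  have yP: "y \<in> P" unfolding y_def using A(1) by (intro fs.subspace_sum[OF P] fs.subspace_scale[OF P]) auto
  have "i s y - (\<Sum>x\<in>A. fscale (c x) (i s x)) \<in> ?B"
    using hlinear_inj_sum[OF hls P A(2), of id c] A(1) fboundaries_subtopology_mono[OF below[OF \<open>s \<in> V'\<close>]]
    unfolding y_def by auto
  then have "i s y \<in> ?B" using fs.subspace_add[OF BS _ csum] by fastforce
  moreover have "i s y - i t y \<in> ?B"
    by (rule compatible_family_rtrancl_diff[OF cf EV below path yP])
  ultimately have "i t y \<in> ?B" using fs.subspace_diff[OF BS] by fastforce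
  then have "i t y - i t 0 \<in> ?B"
    using fs.subspace_diff[OF BS _ hlinear_inj_zero[OF hlt P]] by blast
  then have "y = 0" using hlinear_injD(4)[OF hlt yP fs.subspace_0[OF P]] by blast
  then show "\<forall>x\<in>A. c x = 0"
    using A(3) fs.dependent_finite[OF A(2)] unfolding y_def by blast
qed

lemma compatible_family_dim_le:
  fixes P G :: "('a, 'k::field) fchain set"
  assumes cf: "compatible_family k X Xs V' E' P i" and "s \<in> V'" "t \<in> V'"
    and EV: "E' \<subseteq> V' \<times> V'" and path: "(s, t) \<in> E'\<^sup>*"
    and below: "\<And>w. w \<in> V' \<Longrightarrow> Xs w \<subseteq> Xs t"
    and G: "finite G" "fcycles k (subtopology X (Xs s)) \<subseteq> fs.span (G \<union> fboundaries k (subtopology X (Xs t)))"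
  shows "fs.dim P \<le> card G"
proof -
  obtain A where A: "A \<subseteq> P" "fs.independent A" "P \<subseteq> fs.span A" "card A = fs.dim P"
    by (rule fs.basis_exists)
  show ?thesis
  proof (cases "finite A")
    case True
    have "card A \<le> card G"
    proof (rule fs.card_le_if_independent_modulo[OF subspace_fboundaries G(1) True])
      show "i s x \<in> fs.span (G \<union> fboundaries k (subtopology X (Xs t)))" if "x \<in> A" for x
        using hlinear_injD(1)[OF compatible_familyD(2)[OF cf \<open>s \<in> V'\<close>]] that A(1) G(2) by blast
      show "independent_modulo fscale (fboundaries k (subtopology X (Xs t))) A (i s)"
        by (rule compatible_family_independent_modulo[OF assms(1-6) A(1) True A(2)])
    qed
    then show ?thesis using A(4) by simp
  qed (use A(4) in simp)
qed

lemma persistent_group_dim_eq_hrank: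
  fixes F :: "'k::field itself"
  assumes "s \<in> V'" "t \<in> V'" and between: "\<And>w. w \<in> V' \<Longrightarrow> Xs s \<subseteq> Xs w \<and> Xs w \<subseteq> Xs t"
    and EV: "E' \<subseteq> V' \<times> V'" and path: "(s, t) \<in> E'\<^sup>*"
    and fg: "fg_homology k X (Xs s) F"
  shows "(\<exists>(P :: ('a, 'k) fchain set) ii. persistent_group k X Xs V' E' P ii) \<and>
         (\<forall>(P :: ('a, 'k) fchain set) ii. persistent_group k X Xs V' E' P ii \<longrightarrow>
             fs.dim P = hrank k X (Xs s) (Xs t) F)"
proof -
  have "Xs s \<subseteq> Xs t" using between \<open>s \<in> V'\<close> by blast
  with fg obtain G :: "('a, 'k) fchain set" where G: "finite G" "card G = hrank k X (Xs s) (Xs t) F"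
      "G \<subseteq> fcycles k (subtopology X (Xs s))"
      "fcycles k (subtopology X (Xs s)) \<subseteq> fs.span (G \<union> fboundaries k (subtopology X (Xs t)))"
      "independent_modulo fscale (fboundaries k (subtopology X (Xs t))) G (\<lambda>x. x)"
    by (rule hrank_minimal_generators)
  have cfG: "compatible_family k X Xs V' E' (fs.span G) (\<lambda>_ x. x)"
    using G(1,3,5) between by (rule compatible_family_span_generators)
  have "fs.independent G"
    using subspace_fboundaries G(1,5) by (rule fs.independent_modulo_imp_independent)
  then have dimG: "fs.dim (fs.span G) = hrank k X (Xs s) (Xs t) F"
    using G(2) by (simp add: fs.dim_eq_card_independent)
  have upper: "fs.dim P \<le> hrank k X (Xs s) (Xs t) F"
    if "compatible_family k X Xs V' E' P i" for P :: "('a, 'k) fchain set" and i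
    using compatible_family_dim_le[OF that \<open>s \<in> V'\<close> \<open>t \<in> V'\<close> EV path _ G(1,4)] between G(2)
    by simp
  have "persistent_group k X Xs V' E' (fs.span G) (\<lambda>_ x. x)"
    unfolding persistent_group_def using cfG upper dimG by simp
  moreover have "fs.dim P = hrank k X (Xs s) (Xs t) F"
    if "persistent_group k X Xs V' E' P ii" for P :: "('a, 'k) fchain set" and ii
    using that cfG upper dimG unfolding persistent_group_def by (metis le_antisym)
  ultimately show ?thesis by blast
qed

lemma path_rtrancl: "q \<le> p \<Longrightarrow> (i, i + q) \<in> {(j, Suc j) | j. i \<le> j \<and> j < i + p}\<^sup>*"
proof (induction q)
  case (Suc q)
  then have "(i + q, i + Suc q) \<in> {(j, Suc j) | j. i \<le> j \<and> j < i + p}" by auto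
  with Suc show ?case by (auto intro: rtrancl_into_rtrancl)
qed simp

lemma box_edges_rtrancl:
  assumes "w \<in> grid d m" "v \<in> grid d m" "u \<le> w" "w \<le> v"
  shows "(w, v) \<in> (box_edges d m u v)\<^sup>*"
  using assms
proof (induction "\<Sum>i<d. v i - w i" arbitrary: w rule: less_induct)
  case less
  show ?case
  proof (cases "w = v")
    case False
    then obtain i where i: "w i \<noteq> v i" by (auto simp: fun_eq_iff)
    have wv: "w j \<le> v j" for j using less.prems(4) by (simp add: le_fun_def)
    have "i < d"
    proof (rule ccontr)
      assume "\<not> i < d"
      then have "w i = 0" "v i = 0" using less.prems(1,2) by (auto simp: grid_def)
      with i show False by simp
    qed
    have lt: "w i < v i" using wv[of i] i by simp
    have "v i \<le> m" using less.prems(2) \<open>i < d\<close> by (simp add: grid_def)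
    define w' where "w' = w(i := Suc (w i))"
    have w'box: "w' \<in> box_vertices d m u v" "w' \<in> grid d m"
      using less.prems \<open>i < d\<close> lt wv
      by (auto simp: box_vertices_def grid_def w'_def le_fun_def intro: le_SucI)
    have "(w, w') \<in> grid_edges d m"
      unfolding grid_edges_def w'_def using less.prems(1) \<open>i < d\<close> lt \<open>v i \<le> m\<close> by auto
    then have step: "(w, w') \<in> box_edges d m u v"
      using less.prems w'box by (simp add: box_edges_def box_vertices_def)
    have "(\<Sum>j<d. v j - w' j) < (\<Sum>j<d. v j - w j)"
      by (rule sum_strict_mono_ex1) (use \<open>i < d\<close> lt in \<open>auto simp: w'_def\<close>)
    then have "(w', v) \<in> (box_edges d m u v)\<^sup>*"
      using less.hyps w'box less.prems(2) by (simp add: box_vertices_def)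
    with step show ?thesis by (rule converse_rtrancl_into_rtrancl)
  qed simp
qed

lemma path_filtration_persistent_group:
  fixes F :: "'k::field itself"
  assumes filt: "graph_filtration X {0..n} (path_edges n) Xs"
    and fg: "\<forall>j\<le>n. fg_homology k X (Xs j) F" and "i + p \<le> n"
  shows "(\<exists>(P :: ('a, 'k) fchain set) ii.
            persistent_group k X Xs {i..i+p} {(j, Suc j) | j. i \<le> j \<and> j < i + p} P ii) \<and>
         (\<forall>(P :: ('a, 'k) fchain set) ii.
            persistent_group k X Xs {i..i+p} {(j, Suc j) | j. i \<le> j \<and> j < i + p} P ii \<longrightarrow>
            fs.dim P = hrank k X (Xs i) (Xs (i + p)) F)"
proof (rule persistent_group_dim_eq_hrank)
  have edge: "Xs j \<subseteq> Xs (Suc j)" if "j < n" for j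
    using filt that unfolding graph_filtration_def path_edges_def by blast
  have mono: "Xs a \<subseteq> Xs b" if "a \<le> b" "b \<le> n" for a b
    using that
  proof (induction b rule: dec_induct)
    case (step j)
    then show ?case using edge[of j] by auto
  qed simp
  show "Xs i \<subseteq> Xs w \<and> Xs w \<subseteq> Xs (i + p)" if "w \<in> {i..i+p}" for w
    using that \<open>i + p \<le> n\<close> by (intro conjI mono) auto
  show "(i, i + p) \<in> {(j, Suc j) | j. i \<le> j \<and> j < i + p}\<^sup>*"
    by (rule path_rtrancl) simp
qed (use fg \<open>i + p \<le> n\<close> in auto)

lemma multifiltration_persistent_group:
  fixes F :: "'k::field itself"
  assumes filt: "multifiltration X d m Xs" and fg: "\<forall>w\<in>grid d m. fg_homology k X (Xs w) F"
    and "u \<in> grid d m" "v \<in> grid d m" "u \<le> v"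
  shows "(\<exists>(P :: ('a, 'k) fchain set) ii.
            persistent_group k X Xs (box_vertices d m u v) (box_edges d m u v) P ii) \<and>
         (\<forall>(P :: ('a, 'k) fchain set) ii.
            persistent_group k X Xs (box_vertices d m u v) (box_edges d m u v) P ii \<longrightarrow>
            fs.dim P = hrank k X (Xs u) (Xs v) F)"
proof (rule persistent_group_dim_eq_hrank)
  show "Xs u \<subseteq> Xs w \<and> Xs w \<subseteq> Xs v" if "w \<in> box_vertices d m u v" for w
    using that filt assms(3,4) unfolding box_vertices_def multifiltration_def by blast
  show "(u, v) \<in> (box_edges d m u v)\<^sup>*"
    using assms(3-5) by (rule box_edges_rtrancl[OF _ _ order_refl])
qed (use fg assms(3-5) in \<open>auto simp: box_vertices_def box_edges_def\<close>)

lemma PH_module_path_eq_std_persistence_module: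
  "PH_module k X Xs {0..n} (path_edges n) = std_persistence_module k X Xs n"
  unfolding PH_module_def std_persistence_module_def path_edges_def by (auto simp: fun_eq_iff)

lemma PH_module_zigzag_eq_zigzag_module:
  "PH_module k X Xs {0..n} (zigzag_edges n dir) = zigzag_module k X Xs n dir"
  unfolding PH_module_def zigzag_module_def zigzag_edges_def by (auto simp: fun_eq_iff)

theorem proposition1:
  fixes X :: "'a topology" and k :: nat and F :: "'k::field itself"
  shows
  \<comment> \<open>(1) standard persistence\<close>
  "(\<forall>(Xs :: nat \<Rightarrow> 'a set) n.
      graph_filtration X {0..n} (path_edges n) Xs \<and> (\<forall>j\<le>n. fg_homology k X (Xs j) F) \<longrightarrow>
      (\<forall>i p. i + p \<le> n \<longrightarrow>
         (\<exists>(P :: ('a,'k) fchain set) ii. persistent_group k X Xs {i..i+p} {(j, Suc j) | j. i \<le> j \<and> j < i + p} P ii) \<and>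
         (\<forall>(P :: ('a,'k) fchain set) ii. persistent_group k X Xs {i..i+p} {(j, Suc j) | j. i \<le> j \<and> j < i + p} P ii \<longrightarrow>
             vector_space.dim fscale P = hrank k X (Xs i) (Xs (i + p)) F)) \<and>
      (PH_module k X Xs {0..n} (path_edges n) :: (nat \<Rightarrow> ('a,'k) fchain set set) \<times> _)
        = std_persistence_module k X Xs n)
   \<and>
  \<comment> \<open>(2) zigzag persistence\<close>
   (\<forall>(Xs :: nat \<Rightarrow> 'a set) n dir.
      graph_filtration X {0..n} (zigzag_edges n dir) Xs \<and> (\<forall>j\<le>n. fg_homology k X (Xs j) F) \<longrightarrow>
      (PH_module k X Xs {0..n} (zigzag_edges n dir) :: (nat \<Rightarrow> ('a,'k) fchain set set) \<times> _)
        = zigzag_module k X Xs n dir)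
   \<and>
  \<comment> \<open>(3) multidimensional persistence\<close>
   (\<forall>(Xs :: (nat \<Rightarrow> nat) \<Rightarrow> 'a set) d m.
      multifiltration X d m Xs \<and> (\<forall>v\<in>grid d m. fg_homology k X (Xs v) F) \<longrightarrow>
      (\<forall>u\<in>grid d m. \<forall>v\<in>grid d m. u \<le> v \<longrightarrow>
         (\<exists>(P :: ('a,'k) fchain set) ii. persistent_group k X Xs (box_vertices d m u v) (box_edges d m u v) P ii) \<and>
         (\<forall>(P :: ('a,'k) fchain set) ii. persistent_group k X Xs (box_vertices d m u v) (box_edges d m u v) P ii \<longrightarrow>
             vector_space.dim fscale P = hrank k X (Xs u) (Xs v) F)))"
  by (auto simp: PH_module_path_eq_std_persistence_module PH_module_zigzag_eq_zigzag_module
      dest: path_filtration_persistent_group[where F = F] multifiltration_persistent_group[where F = F])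

end
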